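(* Let $n,t$ be positive integers with $t\le n$, and let $a_1,\dots,a_m$ be positive integers, each at most $n/2$, with $a_1+\dots+a_m=t$. Then: (a) some subset of $\{a_1,\dots,a_m\}$ (as a multiset of terms) has sum between $t/3$ and $n/2$ inclusive; (b) if $t\ge n/4$, some subset of $\{a_1,\dots,a_m\}$ has sum between $n/4$ and $n/2$ inclusive. *)

theory Defs
  imports Main Complex_Main
begin

end

theory Submission
  imports Defs
begin

text \<open>
  If no single term reaches the lower bound \<open>L\<close>, the prefix sums climb past \<open>L\<close> in steps
  shorter than \<open>L\<close>, so the first prefix sum that reaches \<open>L\<close> stays below \<open>2L\<close>. This gives a
  subset sum in \<open>[L, 2L]\<close>, which for \<open>L = n/4\<close> is part (b). For part (a), with \<open>L = t/3\<close>,
  a subset sum in \<open>(n/2, 2t/3]\<close> is too large, but then its complement has sum in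
  \<open>[t/3, t/2)\<close>, and \<open>t/2 \<le> n/2\<close>.
\<close>

lemma prefix_sum_crossing:
  fixes a :: "nat \<Rightarrow> nat" and L c :: real
  assumes small: "\<And>i. i < m \<Longrightarrow> real (a i) < c"
    and reach: "L \<le> real (\<Sum>i<m. a i)" and pos: "0 < L"
  shows "\<exists>k\<le>m. L \<le> real (\<Sum>i<k. a i) \<and> real (\<Sum>i<k. a i) < L + c"
proof -
  define k where "k = (LEAST k. L \<le> real (\<Sum>i<k. a i))"
  have reach_k: "L \<le> real (\<Sum>i<k. a i)"
    unfolding k_def using reach by (rule LeastI)
  have "k \<le> m"
    unfolding k_def using reach by (rule Least_le)
  have "k \<noteq> 0"
    using reach_k pos by (cases k) auto
  then obtain j where j: "k = Suc j" by (cases k) auto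
  have "real (\<Sum>i<j. a i) < L"
    using not_less_Least[of j "\<lambda>k. L \<le> real (\<Sum>i<k. a i)"] j by (auto simp: k_def)
  moreover have "real (a j) < c"
    using small j \<open>k \<le> m\<close> by simp
  ultimately have "real (\<Sum>i<k. a i) < L + c"
    by (simp add: j)
  with reach_k \<open>k \<le> m\<close> show ?thesis by blast
qed

lemma subset_sum_window:
  fixes a :: "nat \<Rightarrow> nat" and L U :: real
  assumes bounded: "\<And>i. i < m \<Longrightarrow> real (a i) \<le> U"
    and reach: "L \<le> real (\<Sum>i<m. a i)" and pos: "0 < L"
  shows "\<exists>S \<subseteq> {..<m}. L \<le> real (\<Sum>i\<in>S. a i) \<and> real (\<Sum>i\<in>S. a i) \<le> max U (2 * L)"
proof (cases "\<exists>i<m. L \<le> real (a i)")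
  case True
  then obtain i where "i < m" "L \<le> real (a i)" by blast
  then show ?thesis
    using bounded[of i] by (intro exI[of _ "{i}"]) auto
next
  case False
  then have "\<And>i. i < m \<Longrightarrow> real (a i) < L" by force
  from prefix_sum_crossing[OF this reach pos] obtain k where
    "k \<le> m" "L \<le> real (\<Sum>i<k. a i)" "real (\<Sum>i<k. a i) < L + L" by blast
  then show ?thesis
    by (intro exI[of _ "{..<k}"]) auto
qed

lemma sum_complement_lessThan:
  fixes a :: "nat \<Rightarrow> nat"
  assumes "S \<subseteq> {..<m}"
  shows "real (\<Sum>i\<in>{..<m} - S. a i) = real (\<Sum>i<m. a i) - real (\<Sum>i\<in>S. a i)"
  using sum.subset_diff[OF assms, of a] by simp

theorem mainTheorem13:
  fixes n t m :: nat and a :: "nat \<Rightarrow> nat"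
  assumes "0 < n" and "0 < t" and "t \<le> n"
    and "\<And>i. i < m \<Longrightarrow> 0 < a i"
    and "\<And>i. i < m \<Longrightarrow> real (a i) \<le> real n / 2"
    and "(\<Sum>i<m. a i) = t"
  shows "(\<exists>S \<subseteq> {..<m}. real t / 3 \<le> real (\<Sum>i\<in>S. a i) \<and> real (\<Sum>i\<in>S. a i) \<le> real n / 2)
       \<and> (real t \<ge> real n / 4 \<longrightarrow>
          (\<exists>S \<subseteq> {..<m}. real n / 4 \<le> real (\<Sum>i\<in>S. a i) \<and> real (\<Sum>i\<in>S. a i) \<le> real n / 2))"
proof (intro conjI impI)
  obtain S where S: "S \<subseteq> {..<m}" "real t / 3 \<le> real (\<Sum>i\<in>S. a i)"
    "real (\<Sum>i\<in>S. a i) \<le> max (real n / 2) (2 * (real t / 3))"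
    using subset_sum_window[of m a "real n / 2" "real t / 3"] assms(2,5,6) by auto
  show "\<exists>S \<subseteq> {..<m}. real t / 3 \<le> real (\<Sum>i\<in>S. a i) \<and> real (\<Sum>i\<in>S. a i) \<le> real n / 2"
  proof (cases "real (\<Sum>i\<in>S. a i) \<le> real n / 2")
    case True
    with S show ?thesis by blast
  next
    case False
    have "real (\<Sum>i\<in>{..<m} - S. a i) = real t - real (\<Sum>i\<in>S. a i)"
      using sum_complement_lessThan[OF S(1), of a] assms(6) by simp
    with S False assms(3) show ?thesis
      by (intro exI[of _ "{..<m} - S"]) auto
  qed
next
  assume "real n / 4 \<le> real t"
  then show "\<exists>S \<subseteq> {..<m}. real n / 4 \<le> real (\<Sum>i\<in>S. a i) \<and> real (\<Sum>i\<in>S. a i) \<le> real n / 2"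
    using subset_sum_window[of m a "real n / 2" "real n / 4"] assms(1,5,6) by auto
qed

end
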